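(* At any point during the execution of the Part I procedure, let $uv\in E$ be an edge such that $u$ is even and $v$ is odd. Then $\mathrm{lcp}_{\mathrm{odd}}(v)\le \mathrm{lcp}(u)+1$.
   Context: Let $G=(V,E)$ be a finite undirected graph and $M$ a matching in $G$; free vertices and $\mathit{mate}(v)$ are as usual. The Part I procedure maintains a search structure $S$: a forest whose nodes are either single (odd) vertices or blossoms (disjoint vertex sets with a distinguished base vertex), each tree rooted at a blossom containing a free vertex. Vertices in $S$ are labelled even (those in blossoms) or odd; vertices not in $S$ are unlabelled. A vertex is born even/odd according to the label it receives when inserted. The procedure maintains $\mathrm{lcp}(v)$ for even vertices and $\mathrm{lcp}_{\mathrm{odd}}(v)$ for vertices born odd. The blossom nodes currently in $S$ are the maximal blossoms. Phase $0$: every free vertex $v$ becomes the root of its own tree as a trivial blossom $\{v\}$ with base $v$, even, $\mathrm{lcp}(v)=0$. For $\Delta=1,2,\dots$, phase $\Delta$ does: (i) if $\Delta$ is even, growth steps: while some even vertex $v$ with $\mathrm{lcp}(v)=\Delta-2$ has a neighbour $x$ not in $S$, add $x$ as an odd child of the blossom containing $v$ with $\mathrm{lcp}_{\mathrm{odd}}(x)=\Delta-1$, and $\mathit{mate}(x)$ as a child of $x$, as a trivial even blossom with $\mathrm{lcp}(\mathit{mate}(x))=\Delta$; (ii) bridge steps: while there is a non-matching edge $xy$ with $x,y$ even, in different maximal blossoms $B_x,B_y$, and $\mathrm{lcp}(x)+\mathrm{lcp}(y)=2\Delta-2$: if $B_x,B_y$ lie in different trees the procedure stops; otherwise let $B$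 be the lowest common ancestor of $B_x,B_y$; every odd vertex $z$ on the tree paths from $B_x$ and $B_y$ to $B$ becomes even with $\mathrm{lcp}(z)=\mathrm{lcp}(x)+1+\mathrm{lcp}(y)-\mathrm{lcp}_{\mathrm{odd}}(z)$, and $B$ together with all blossoms and odd vertices on both paths is merged into one new blossom with base equal to the base of $B$, replacing $B$ in the tree. *)

theory Defs
  imports Main
begin

definition graph :: "'a set \<Rightarrow> 'a set set \<Rightarrow> bool" where
  "graph V E \<longleftrightarrow> finite V \<and> (\<forall>e\<in>E. \<exists>x y. e = {x, y} \<and> x \<noteq> y \<and> x \<in> V \<and> y \<in> V)"

definition matching :: "'a set set \<Rightarrow> 'a set set \<Rightarrow> bool" where
  "matching E M \<longleftrightarrow> M \<subseteq> E \<and> (\<forall>e\<in>M. \<forall>e'\<in>M. e \<noteq> e' \<longrightarrow> e \<inter> e' = {})"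

definition free :: "'a set \<Rightarrow> 'a set set \<Rightarrow> 'a \<Rightarrow> bool" where
  "free V M v \<longleftrightarrow> v \<in> V \<and> (\<forall>e\<in>M. v \<notin> e)"

definition mate :: "'a set set \<Rightarrow> 'a \<Rightarrow> 'a" where
  "mate M x = (THE y. {x, y} \<in> M)"

text \<open>Nodes of the search forest: single odd vertices, or blossoms (vertex set, base).\<close>
datatype 'a node = OddN 'a | Blos "'a set" 'a

fun verts :: "'a node \<Rightarrow> 'a set" where
  "verts (OddN v) = {v}"
| "verts (Blos S b) = S"

fun nbase :: "'a node \<Rightarrow> 'a" where
  "nbase (OddN v) = v"
| "nbase (Blos S b) = b"

fun is_blossom :: "'a node \<Rightarrow> bool" where
  "is_blossom (OddN v) = False"
| "is_blossom (Blos S b) = True"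

datatype stage = Growth | Bridge | Stopped

text \<open>State of the procedure: the nodes of S (the maximal blossoms and the odd vertices),
  the parent pointers of the forest, lcp, lcp_odd, the current phase Delta and the
  current stage within the phase.\<close>
record 'a sstate =
  nodes :: "'a node set"
  par :: "'a node \<Rightarrow> 'a node option"
  lcp :: "'a \<Rightarrow> int"
  lcpo :: "'a \<Rightarrow> int"
  dlt :: nat
  stg :: stage

definition inS :: "'a sstate \<Rightarrow> 'a \<Rightarrow> bool" where
  "inS st v \<longleftrightarrow> v \<in> \<Union> (verts ` nodes st)"

definition is_even :: "'a sstate \<Rightarrow> 'a \<Rightarrow> bool" where
  "is_even st v \<longleftrightarrow> (\<exists>S b. Blos S b \<in> nodes st \<and> v \<in> S)"

definition is_odd :: "'a sstate \<Rightarrow> 'a \<Rightarrow> bool" where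
  "is_odd st v \<longleftrightarrow> OddN v \<in> nodes st"

definition parrel :: "'a sstate \<Rightarrow> ('a node \<times> 'a node) set" where
  "parrel st = {(N, P). N \<in> nodes st \<and> par st N = Some P}"

definition anc :: "'a sstate \<Rightarrow> 'a node \<Rightarrow> 'a node set" where
  "anc st N = {P. (N, P) \<in> (parrel st)\<^sup>*}"

definition sanc :: "'a sstate \<Rightarrow> 'a node \<Rightarrow> 'a node set" where
  "sanc st N = {P. (N, P) \<in> (parrel st)\<^sup>+}"

text \<open>State after phase 0; the procedure then starts phase Delta = 1.\<close>
definition init :: "'a set \<Rightarrow> 'a set set \<Rightarrow> 'a sstate" where
  "init V M = \<lparr> nodes = {Blos {v} v | v. free V M v}, par = (\<lambda>_. None),
                lcp = (\<lambda>_. 0), lcpo = (\<lambda>_. 0), dlt = 1, stg = Growth \<rparr>"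

definition growth_possible :: "'a set set \<Rightarrow> 'a sstate \<Rightarrow> bool" where
  "growth_possible E st \<longleftrightarrow>
     (\<exists>v x. is_even st v \<and> lcp st v = int (dlt st) - 2 \<and> {v, x} \<in> E \<and> \<not> inS st x)"

definition bridge_edge :: "'a set set \<Rightarrow> 'a set set \<Rightarrow> 'a sstate \<Rightarrow> 'a \<Rightarrow> 'a \<Rightarrow> 'a node \<Rightarrow> 'a node \<Rightarrow> bool" where
  "bridge_edge E M st x y Bx By \<longleftrightarrow>
     stg st = Bridge \<and> {x, y} \<in> E \<and> {x, y} \<notin> M \<and>
     Bx \<in> nodes st \<and> By \<in> nodes st \<and> is_blossom Bx \<and> is_blossom By \<and>
     x \<in> verts Bx \<and> y \<in> verts By \<and> Bx \<noteq> By \<and>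
     lcp st x + lcp st y = 2 * int (dlt st) - 2"

text \<open>Blossom formation: B is the lowest common ancestor of Bx and By; P is the set of
  nodes on the two tree paths from Bx and By to B (including B).\<close>
definition merge_state :: "'a sstate \<Rightarrow> 'a \<Rightarrow> 'a \<Rightarrow> 'a node \<Rightarrow> 'a node \<Rightarrow> 'a node \<Rightarrow> 'a sstate" where
  "merge_state st x y Bx By B =
    (let P = (anc st Bx \<union> anc st By) - sanc st B;
         Nw = Blos (\<Union> (verts ` P)) (nbase B)
     in st\<lparr> nodes := (nodes st - P) \<union> {Nw},
            par := (\<lambda>N. if N = Nw then par st B
                         else (case par st N of None \<Rightarrow> None
                                | Some Q \<Rightarrow> if Q \<in> P then Some Nw else Some Q)),
            lcp := (\<lambda>z. if OddN z \<in> P then lcp st x + 1 + lcp st y - lcpo st z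
                        else lcp st z) \<rparr>)"

inductive step :: "'a set set \<Rightarrow> 'a set set \<Rightarrow> 'a sstate \<Rightarrow> 'a sstate \<Rightarrow> bool"
  for E M where
  grow: "\<lbrakk> stg st = Growth; even (dlt st); Blos S b \<in> nodes st; v \<in> S;
           lcp st v = int (dlt st) - 2; {v, x} \<in> E; \<not> inS st x; y = mate M x \<rbrakk>
         \<Longrightarrow> step E M st (st\<lparr> nodes := nodes st \<union> {OddN x, Blos {y} y},
                par := (par st)(OddN x := Some (Blos S b), Blos {y} y := Some (OddN x)),
                lcpo := (lcpo st)(x := int (dlt st) - 1),
                lcp := (lcp st)(y := int (dlt st)) \<rparr>)"
| to_bridge: "\<lbrakk> stg st = Growth; \<not> (even (dlt st) \<and> growth_possible E st) \<rbrakk>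
         \<Longrightarrow> step E M st (st\<lparr> stg := Bridge \<rparr>)"
| stop: "\<lbrakk> bridge_edge E M st x y Bx By; anc st Bx \<inter> anc st By = {} \<rbrakk>
         \<Longrightarrow> step E M st (st\<lparr> stg := Stopped \<rparr>)"
| merge: "\<lbrakk> bridge_edge E M st x y Bx By; B \<in> anc st Bx \<inter> anc st By;
            \<forall>C \<in> anc st Bx \<inter> anc st By. C \<in> anc st B \<rbrakk>
         \<Longrightarrow> step E M st (merge_state st x y Bx By B)"
| next_phase: "\<lbrakk> stg st = Bridge; \<not> (\<exists>x y Bx By. bridge_edge E M st x y Bx By) \<rbrakk>
         \<Longrightarrow> step E M st (st\<lparr> dlt := dlt st + 1, stg := Growth \<rparr>)"

end

theory Submission
  imports Defs
begin

(* The bound is one clause of an invariant preserved by every step.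
  A growth step creates an odd x with lcp_odd(x) = Delta - 1; since x was not in S, no even
  neighbour u of x is saturated, so lcp(u) >= Delta - 2. A bridge step turns odd vertices z
  into even ones with lcp(z) = 2 Delta - 1 - lcp_odd(z) >= Delta. Since lcp_odd stays below
  Delta, both steps respect the bound; the parities make the saturation clause survive the
  passage from phase Delta to Delta + 1. *)

definition saturated :: "'a set set \<Rightarrow> 'a sstate \<Rightarrow> 'a \<Rightarrow> bool" where
  "saturated E st u \<longleftrightarrow> (\<forall>w. {u, w} \<in> E \<longrightarrow> inS st w)"

definition parents_closed :: "'a sstate \<Rightarrow> bool" where
  "parents_closed st \<longleftrightarrow> (\<forall>N\<in>nodes st. \<forall>Q. par st N = Some Q \<longrightarrow> Q \<in> nodes st)"

definition lcp_invariant :: "'a set set \<Rightarrow> 'a sstate \<Rightarrow> bool" where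
  "lcp_invariant E st \<longleftrightarrow>
     parents_closed st \<and>
     (\<forall>w. is_odd st w \<longrightarrow> odd (lcpo st w) \<and> lcpo st w < int (dlt st)) \<and>
     (\<forall>u. is_even st u \<longrightarrow> even (lcp st u)) \<and>
     (\<forall>u. is_even st u \<longrightarrow> lcp st u + 2 < int (dlt st) \<longrightarrow> saturated E st u) \<and>
     (\<forall>u. is_even st u \<longrightarrow> stg st \<noteq> Growth \<longrightarrow> even (dlt st) \<longrightarrow>
          lcp st u + 2 = int (dlt st) \<longrightarrow> saturated E st u) \<and>
     (\<forall>u w. {u, w} \<in> E \<longrightarrow> is_even st u \<longrightarrow> is_odd st w \<longrightarrow> lcpo st w \<le> lcp st u + 1)"

lemma lcp_invariantI:
  assumes "parents_closed st"
    and "\<And>w. is_odd st w \<Longrightarrow> odd (lcpo st w) \<and> lcpo st w < int (dlt st)"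
    and "\<And>u. is_even st u \<Longrightarrow> even (lcp st u)"
    and "\<And>u. is_even st u \<Longrightarrow> lcp st u + 2 < int (dlt st) \<Longrightarrow> saturated E st u"
    and "\<And>u. is_even st u \<Longrightarrow> stg st \<noteq> Growth \<Longrightarrow> even (dlt st) \<Longrightarrow>
           lcp st u + 2 = int (dlt st) \<Longrightarrow> saturated E st u"
    and "\<And>u w. {u, w} \<in> E \<Longrightarrow> is_even st u \<Longrightarrow> is_odd st w \<Longrightarrow> lcpo st w \<le> lcp st u + 1"
  shows "lcp_invariant E st"
  using assms unfolding lcp_invariant_def by blast

lemma
  assumes "lcp_invariant E st"
  shows lcp_invariant_parents_closed: "parents_closed st"
    and lcp_invariant_odd_lcpo: "is_odd st w \<Longrightarrow> odd (lcpo st w)"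
    and lcp_invariant_lcpo_less: "is_odd st w \<Longrightarrow> lcpo st w < int (dlt st)"
    and lcp_invariant_even_lcp: "is_even st u \<Longrightarrow> even (lcp st u)"
    and lcp_invariant_saturated_below:
      "is_even st u \<Longrightarrow> lcp st u + 2 < int (dlt st) \<Longrightarrow> saturated E st u"
    and lcp_invariant_saturated_level:
      "is_even st u \<Longrightarrow> stg st \<noteq> Growth \<Longrightarrow> even (dlt st) \<Longrightarrow>
       lcp st u + 2 = int (dlt st) \<Longrightarrow> saturated E st u"
    and lcp_invariant_lcpo_le:
      "{u, w} \<in> E \<Longrightarrow> is_even st u \<Longrightarrow> is_odd st w \<Longrightarrow> lcpo st w \<le> lcp st u + 1"
  using assms unfolding lcp_invariant_def by blast+

lemma saturated_mono:
  assumes "saturated E st u" and "\<And>w. inS st w \<Longrightarrow> inS st' w"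
  shows "saturated E st' u"
  using assms unfolding saturated_def by blast

lemma anc_subset_nodes:
  assumes "parents_closed st" and "N \<in> nodes st"
  shows "anc st N \<subseteq> nodes st"
proof
  fix P assume "P \<in> anc st N"
  then have "(N, P) \<in> (parrel st)\<^sup>*" unfolding anc_def by simp
  then show "P \<in> nodes st"
    by induction (use assms in \<open>auto simp: parents_closed_def parrel_def\<close>)
qed

lemma lcp_invariant_init: "lcp_invariant E (init V M)"
  by (rule lcp_invariantI) (auto simp: init_def parents_closed_def is_odd_def)

lemma lcp_invariant_grow:
  assumes inv: "lcp_invariant E st"
    and growth: "stg st = Growth" and even_phase: "even (dlt st)"
    and parent: "Blos S b \<in> nodes st" and new: "\<not> inS st x"
  shows "lcp_invariant E (st\<lparr> nodes := nodes st \<union> {OddN x, Blos {y} y},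
                par := (par st)(OddN x := Some (Blos S b), Blos {y} y := Some (OddN x)),
                lcpo := (lcpo st)(x := int (dlt st) - 1),
                lcp := (lcp st)(y := int (dlt st)) \<rparr>)" (is "lcp_invariant E ?st")
proof -
  have even_iff: "is_even ?st u \<longleftrightarrow> is_even st u \<or> u = y" for u
    unfolding is_even_def by auto
  have odd_iff: "is_odd ?st w \<longleftrightarrow> is_odd st w \<or> w = x" for w
    unfolding is_odd_def by auto
  have inS_mono: "inS st w \<Longrightarrow> inS ?st w" for w
    unfolding inS_def by auto
  have lcpo_new: "is_odd ?st w \<Longrightarrow> odd (lcpo ?st w) \<and> lcpo ?st w < int (dlt ?st)" for w
    using odd_iff[of w] even_phase lcp_invariant_odd_lcpo[OF inv] lcp_invariant_lcpo_less[OF inv]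
    by auto
  show ?thesis
  proof (rule lcp_invariantI)
    show "parents_closed ?st"
      using lcp_invariant_parents_closed[OF inv] parent by (auto simp: parents_closed_def)
  next
    fix u assume "is_even ?st u"
    then show "even (lcp ?st u)"
      using even_iff even_phase lcp_invariant_even_lcp[OF inv] by auto
  next
    fix u assume u: "is_even ?st u" and low: "lcp ?st u + 2 < int (dlt ?st)"
    then have "u \<noteq> y" by auto
    then have "saturated E st u"
      using u low even_iff lcp_invariant_saturated_below[OF inv] by auto
    then show "saturated E ?st u" using inS_mono by (rule saturated_mono)
  next
    fix u w assume edge: "{u, w} \<in> E" and u: "is_even ?st u" and w: "is_odd ?st w"
    show "lcpo ?st w \<le> lcp ?st u + 1"
    proof (cases "u = y")
      case True
      then show ?thesis using lcpo_new[OF w] by simp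
    next
      case False
      then have u_old: "is_even st u" and lcp_u: "lcp ?st u = lcp st u"
        using u even_iff by auto
      show ?thesis
      proof (cases "w = x")
        case True
        then have "\<not> saturated E st u" using edge new unfolding saturated_def by blast
        then have "\<not> lcp st u + 2 < int (dlt st)"
          using lcp_invariant_saturated_below[OF inv u_old] by blast
        then show ?thesis using True lcp_u by simp
      next
        case False
        then show ?thesis
          using w odd_iff lcp_u lcp_invariant_lcpo_le[OF inv edge u_old] by simp
      qed
    qed
  qed (use growth lcpo_new in simp_all)
qed

lemma inS_merge_state:
  assumes "inS st u"
  shows "inS (merge_state st x y Bx By B) u"
  using assms unfolding inS_def merge_state_def Let_def by auto

lemma is_odd_merge_stateD:
  assumes "is_odd (merge_state st x y Bx By B) w"
  shows "is_odd st w"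
  using assms unfolding is_odd_def merge_state_def Let_def by auto

lemma is_even_merge_stateD:
  assumes "is_even (merge_state st x y Bx By B) u"
    and "anc st Bx \<union> anc st By \<subseteq> nodes st"
  shows "is_even st u \<and> lcp (merge_state st x y Bx By B) u = lcp st u
       \<or> is_odd st u \<and> lcp (merge_state st x y Bx By B) u = lcp st x + 1 + lcp st y - lcpo st u"
proof -
  define P where "P = (anc st Bx \<union> anc st By) - sanc st B"
  have lcp_eq: "lcp (merge_state st x y Bx By B) u =
      (if OddN u \<in> P then lcp st x + 1 + lcp st y - lcpo st u else lcp st u)"
    unfolding merge_state_def Let_def P_def by simp
  show ?thesis
  proof (cases "OddN u \<in> P")
    case True
    then show ?thesis using assms(2) lcp_eq unfolding P_def is_odd_def by auto
  next
    assume not_new: "OddN u \<notin> P"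
    from assms(1) obtain S b where Sb: "Blos S b \<in> nodes (merge_state st x y Bx By B)" "u \<in> S"
      unfolding is_even_def by blast
    have "\<exists>N \<in> nodes st. is_blossom N \<and> u \<in> verts N"
    proof (cases "Blos S b \<in> nodes st")
      case True
      then show ?thesis using Sb(2) by force
    next
      case False
      then have "S = \<Union> (verts ` P)"
        using Sb(1) unfolding merge_state_def Let_def P_def[symmetric] by auto
      then obtain N where "N \<in> P" "u \<in> verts N" using Sb(2) by blast
      moreover have "N \<noteq> OddN u" using \<open>N \<in> P\<close> not_new by blast
      ultimately show ?thesis using assms(2) unfolding P_def by (cases N) force+
    qed
    then have "is_even st u" unfolding is_even_def by (auto elim!: is_blossom.elims)
    then show ?thesis using not_new lcp_eq by simp
  qed
qed

lemma parents_closed_merge_state: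
  assumes closed: "parents_closed st" and B: "B \<in> nodes st"
  shows "parents_closed (merge_state st x y Bx By B)"
proof -
  define P where "P = (anc st Bx \<union> anc st By) - sanc st B"
  have "Q \<notin> P" if "par st B = Some Q" for Q
    using that B unfolding P_def sanc_def parrel_def by auto
  then show ?thesis
    using closed B unfolding parents_closed_def merge_state_def Let_def P_def[symmetric]
    by (auto split: option.splits if_splits)
qed

lemma lcp_invariant_merge:
  assumes inv: "lcp_invariant E st"
    and bridge: "bridge_edge E M st x y Bx By" and B: "B \<in> anc st Bx \<inter> anc st By"
  shows "lcp_invariant E (merge_state st x y Bx By B)" (is "lcp_invariant E ?st")
proof -
  have closed: "parents_closed st" by (rule lcp_invariant_parents_closed[OF inv])
  have "Bx \<in> nodes st" "By \<in> nodes st" and sum: "lcp st x + lcp st y = 2 * int (dlt st) - 2"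
    using bridge unfolding bridge_edge_def by auto
  then have path: "anc st Bx \<union> anc st By \<subseteq> nodes st"
    using anc_subset_nodes[OF closed] by blast
  have fields: "lcpo ?st = lcpo st" "dlt ?st = dlt st" "stg ?st = stg st"
    unfolding merge_state_def Let_def by simp_all
  have new_even:
    "is_even st u \<and> lcp ?st u = lcp st u \<or> int (dlt st) \<le> lcp ?st u \<and> even (lcp ?st u)"
    if "is_even ?st u" for u
    using is_even_merge_stateD[OF that path]
  proof
    assume "is_odd st u \<and> lcp ?st u = lcp st x + 1 + lcp st y - lcpo st u"
    then have "lcp ?st u = 2 * int (dlt st) - 1 - lcpo st u"
      and "odd (lcpo st u)" "lcpo st u < int (dlt st)"
      using sum lcp_invariant_odd_lcpo[OF inv] lcp_invariant_lcpo_less[OF inv] by auto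
    then show ?thesis by auto
  qed simp
  show ?thesis
  proof (rule lcp_invariantI)
    show "parents_closed ?st"
      using parents_closed_merge_state[OF closed] B path by blast
  next
    fix w assume "is_odd ?st w"
    then show "odd (lcpo ?st w) \<and> lcpo ?st w < int (dlt ?st)"
      using is_odd_merge_stateD fields
        lcp_invariant_odd_lcpo[OF inv] lcp_invariant_lcpo_less[OF inv]
      by metis
  next
    fix u assume "is_even ?st u"
    then show "even (lcp ?st u)" using new_even lcp_invariant_even_lcp[OF inv] by metis
  next
    fix u assume "is_even ?st u" and "lcp ?st u + 2 < int (dlt ?st)"
    then have "is_even st u" "lcp st u + 2 < int (dlt st)" using new_even fields by force+
    then show "saturated E ?st u"
      using lcp_invariant_saturated_below[OF inv] inS_merge_state saturated_mono by metis
  next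
    fix u assume "is_even ?st u" and "stg ?st \<noteq> Growth" and "even (dlt ?st)"
      and "lcp ?st u + 2 = int (dlt ?st)"
    then have "is_even st u" "lcp st u + 2 = int (dlt st)" "stg st \<noteq> Growth" "even (dlt st)"
      using new_even fields by force+
    then show "saturated E ?st u"
      using lcp_invariant_saturated_level[OF inv] inS_merge_state saturated_mono by metis
  next
    fix u w assume edge: "{u, w} \<in> E" and u: "is_even ?st u" and "is_odd ?st w"
    from \<open>is_odd ?st w\<close> have w: "is_odd st w" by (rule is_odd_merge_stateD)
    show "lcpo ?st w \<le> lcp ?st u + 1"
      using new_even[OF u] fields lcp_invariant_lcpo_le[OF inv edge _ w]
        lcp_invariant_lcpo_less[OF inv w]
      by force
  qed
qed

lemma lcp_invariant_stage_update:
  assumes "lcp_invariant E st"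
    and "\<And>u. s \<noteq> Growth \<Longrightarrow> even (dlt st) \<Longrightarrow> is_even st u \<Longrightarrow>
           lcp st u + 2 = int (dlt st) \<Longrightarrow> saturated E st u"
  shows "lcp_invariant E (st\<lparr>stg := s\<rparr>)"
  using assms
  unfolding lcp_invariant_def parents_closed_def saturated_def is_even_def is_odd_def inS_def
  by simp

lemma lcp_invariant_next_phase:
  assumes inv: "lcp_invariant E st" and bridge: "stg st = Bridge"
  shows "lcp_invariant E (st\<lparr>dlt := dlt st + 1, stg := Growth\<rparr>)" (is "lcp_invariant E ?st")
proof -
  have same: "is_even ?st = is_even st" "is_odd ?st = is_odd st" "saturated E ?st = saturated E st"
    "parents_closed ?st = parents_closed st"
    unfolding is_even_def[abs_def] is_odd_def[abs_def] saturated_def[abs_def] inS_def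
      parents_closed_def by simp_all
  have saturated: "saturated E st u"
    if u: "is_even st u" and low: "lcp st u + 2 < int (dlt st) + 1" for u
  proof (cases "lcp st u + 2 < int (dlt st)")
    case True
    then show ?thesis using lcp_invariant_saturated_below[OF inv u] by blast
  next
    case False
    then have level: "lcp st u + 2 = int (dlt st)" using low by simp
    then have "even (dlt st)"
      using lcp_invariant_even_lcp[OF inv u] by (metis even_add even_of_nat even_numeral)
    then show ?thesis using lcp_invariant_saturated_level[OF inv u] bridge level by simp
  qed
  show ?thesis
  proof (rule lcp_invariantI)
    show "parents_closed ?st" using same lcp_invariant_parents_closed[OF inv] by simp
  next
    fix w assume "is_odd ?st w"
    then show "odd (lcpo ?st w) \<and> lcpo ?st w < int (dlt ?st)"
      using same lcp_invariant_odd_lcpo[OF inv] lcp_invariant_lcpo_less[OF inv] by fastforce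
  next
    fix u assume "is_even ?st u"
    then show "even (lcp ?st u)" using same lcp_invariant_even_lcp[OF inv] by simp
  next
    fix u assume "is_even ?st u" and "lcp ?st u + 2 < int (dlt ?st)"
    then show "saturated E ?st u" using same saturated by simp
  next
    fix u assume "stg ?st \<noteq> Growth"
    then show "saturated E ?st u" by simp
  next
    fix u w assume "{u, w} \<in> E" and "is_even ?st u" and "is_odd ?st w"
    then show "lcpo ?st w \<le> lcp ?st u + 1" using same lcp_invariant_lcpo_le[OF inv] by simp
  qed
qed

lemma lcp_invariant_step:
  assumes "step E M st st'" and "lcp_invariant E st"
  shows "lcp_invariant E st'"
  using assms
proof (induction rule: step.induct)
  case (grow st S b v x y)
  then show ?case by (intro lcp_invariant_grow) auto
next
  case (to_bridge st)
  show ?case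
  proof (rule lcp_invariant_stage_update[OF to_bridge.prems])
    fix u assume "even (dlt st)" "is_even st u" "lcp st u + 2 = int (dlt st)"
    then show "saturated E st u"
      using to_bridge.hyps unfolding growth_possible_def saturated_def by force
  qed
next
  case (stop st x y Bx By)
  then have "stg st = Bridge" unfolding bridge_edge_def by simp
  then show ?case
    using lcp_invariant_stage_update lcp_invariant_saturated_level stop.prems by fastforce
next
  case (merge st x y Bx By B)
  then show ?case by (intro lcp_invariant_merge) auto
next
  case (next_phase st)
  then show ?case by (intro lcp_invariant_next_phase)
qed

lemma lcp_invariant_reachable:
  assumes "(step E M)\<^sup>*\<^sup>* (init V M) st"
  shows "lcp_invariant E st"
  using assms
  by induction (auto intro: lcp_invariant_init lcp_invariant_step)

theorem lemma2:
  fixes V :: "'a set" and E M :: "'a set set" and st :: "'a sstate" and u v :: 'a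
  assumes "graph V E" and "matching E M"
    and "(step E M)\<^sup>*\<^sup>* (init V M) st"
    and "{u, v} \<in> E" and "is_even st u" and "is_odd st v"
  shows "lcpo st v \<le> lcp st u + 1"
  using lcp_invariant_reachable[OF assms(3)] assms(4-6) by (rule lcp_invariant_lcpo_le)

end
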